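(* Let $\Bbbk$ be a field, $V$ a finite-dimensional $\Bbbk$-vector space and $R$ a Hecke symmetry on $V$ with parameter $q$. Assume $\dim\Upsilon^{(n)}=1$ and $\Upsilon^{(n+1)}=0$ for some $n>0$, fix $0\neq t\in\Upsilon^{(n)}$, and let $\theta\in GL(V)$ be defined by $R_n^{(n+1)}R_{n-1}^{(n+1)}\cdots R_1^{(n+1)}(vt)=t\,\theta(v)$ for all $v\in V$. Then $\theta\otimes\theta$ commutes with $R$. In particular, $\theta$ extends to automorphisms of $\Lambda(V,R)$ and of $\mathbb{S}(V,R)$.
   Context: A Hecke symmetry on $V$ with parameter $0\neq q\in\Bbbk$ is a linear map $R:V\otimes V\to V\otimes V$ satisfying $(R\otimes\mathrm{Id}_V)(\mathrm{Id}_V\otimes R)(R\otimes\mathrm{Id}_V)=(\mathrm{Id}_V\otimes R)(R\otimes\mathrm{Id}_V)(\mathrm{Id}_V\otimes R)$ and $(R-q\,\mathrm{Id})(R+\mathrm{Id})=0$ ($q=-1$ allowed). $\mathbb{S}(V,R)$ and $\Lambda(V,R)$ are the quotients of the tensor algebra $\mathbb{T}(V)$ by the ideals generated by $\mathrm{Im}(R-q\,\mathrm{Id})$ and $\mathrm{Ker}(R-q\,\mathrm{Id})$ respectively. In $\mathbb{T}(V)$ products are written $ab=a\otimes b$. For $p\ge2$, $1\le i\le p-1$, $R_i^{(p)}=\mathrm{Id}_V^{\otimes(i-1)}\otimes R\otimes\mathrm{Id}_V^{\otimes(p-i-1)}$. $\Upsilon^{(0)}=\Bbbk$, $\Upsilon^{(1)}=V$,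 $\Upsilon^{(p)}=\bigcap_{i=1}^{p-1}(R_i^{(p)}-q\,\mathrm{Id})V^{\otimes p}$ ($p\ge2$). The operator $\theta$ is well defined and invertible under the hypotheses. *)

theory Defs
  imports Complex_Main "HOL-Library.Function_Algebras"
begin

text \<open>V is a d-dimensional vector space over the field 'k with
  basis e_0,...,e_(d-1).  An element of the tensor power V^(p) is represented by its
  coefficient function on index lists (words of length p over {0..<d}); the function
  vanishes outside such words.  Products in T(V) are concatenation of words.\<close>

definition idx :: "nat \<Rightarrow> nat \<Rightarrow> nat list set" where
  "idx d p = {xs. length xs = p \<and> set xs \<subseteq> {..<d}}"

definition tensors :: "nat \<Rightarrow> nat \<Rightarrow> (nat list \<Rightarrow> 'k::field) set" where
  "tensors d p = {f. \<forall>xs. f xs \<noteq> 0 \<longrightarrow> xs \<in> idx d p}"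

definition tscale :: "'k::field \<Rightarrow> (nat list \<Rightarrow> 'k) \<Rightarrow> (nat list \<Rightarrow> 'k)" where
  "tscale c f = (\<lambda>xs. c * f xs)"

definition tmul :: "nat \<Rightarrow> (nat list \<Rightarrow> 'k::field) \<Rightarrow> (nat list \<Rightarrow> 'k) \<Rightarrow> (nat list \<Rightarrow> 'k)" where
  "tmul i a b = (\<lambda>xs. a (take i xs) * b (drop i xs))"

text \<open>The linear map R on V\<otimes>V is given by its matrix Rm:
  R(e_a \<otimes> e_b) = \<Sum>_{c,e} Rm c e a b  e_c \<otimes> e_e.
  Rop d Rm p i is R acting on tensor factors i, i+1 (0-based) of V^(p), i.e. the
  paper's R_(i+1)^(p).\<close>
definition Rop :: "nat \<Rightarrow> (nat \<Rightarrow> nat \<Rightarrow> nat \<Rightarrow> nat \<Rightarrow> 'k::field) \<Rightarrow> nat \<Rightarrow> nat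
    \<Rightarrow> (nat list \<Rightarrow> 'k) \<Rightarrow> (nat list \<Rightarrow> 'k)" where
  "Rop d Rm p i f = (\<lambda>xs. if xs \<in> idx d p then
      (\<Sum>a<d. \<Sum>b<d. Rm (xs!i) (xs!(i+1)) a b * f (xs[i := a, Suc i := b])) else 0)"

definition hecke :: "nat \<Rightarrow> (nat \<Rightarrow> nat \<Rightarrow> nat \<Rightarrow> nat \<Rightarrow> 'k::field) \<Rightarrow> 'k \<Rightarrow> bool" where
  "hecke d Rm q \<longleftrightarrow> q \<noteq> 0 \<and>
     (\<forall>f\<in>tensors d 3. Rop d Rm 3 0 (Rop d Rm 3 1 (Rop d Rm 3 0 f))
                      = Rop d Rm 3 1 (Rop d Rm 3 0 (Rop d Rm 3 1 f))) \<and>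
     (\<forall>f\<in>tensors d 2. let g = Rop d Rm 2 0 f + f in Rop d Rm 2 0 g - tscale q g = 0)"

text \<open>Upsilon^(p): intersection over 1 \<le> i \<le> p-1 of Im(R_i^(p) - q Id);
  for p = 0, 1 the (empty) intersection is the whole of V^(p) (= k, resp. V).\<close>
definition Upsilon :: "nat \<Rightarrow> (nat \<Rightarrow> nat \<Rightarrow> nat \<Rightarrow> nat \<Rightarrow> 'k::field) \<Rightarrow> 'k \<Rightarrow> nat
    \<Rightarrow> (nat list \<Rightarrow> 'k) set" where
  "Upsilon d Rm q p = {f \<in> tensors d p. \<forall>i. Suc i < p \<longrightarrow>
      f \<in> (\<lambda>g. Rop d Rm p i g - tscale q g) ` tensors d p}"

definition tdim :: "(nat list \<Rightarrow> 'k::field) set \<Rightarrow> nat" where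
  "tdim S = vector_space.dim (tscale :: 'k \<Rightarrow> _) S"

definition tspan :: "(nat list \<Rightarrow> 'k::field) set \<Rightarrow> (nat list \<Rightarrow> 'k) set" where
  "tspan S = module.span (tscale :: 'k \<Rightarrow> _) S"

text \<open>R_n^(n+1) R_(n-1)^(n+1) ... R_1^(n+1): R_1 is applied first.\<close>
definition Rchain :: "nat \<Rightarrow> (nat \<Rightarrow> nat \<Rightarrow> nat \<Rightarrow> nat \<Rightarrow> 'k::field) \<Rightarrow> nat
    \<Rightarrow> (nat list \<Rightarrow> 'k) \<Rightarrow> (nat list \<Rightarrow> 'k)" where
  "Rchain d Rm n f = foldl (\<lambda>g i. Rop d Rm (Suc n) i g) f [0..<n]"

text \<open>theta given by its matrix Th: theta(e_j) = \<Sum>_i Th i j e_i.  thpow d Th p is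
  theta^(\<otimes>p) acting on V^(p) (the degree-p part of the induced map on T(V)).\<close>
definition thpow :: "nat \<Rightarrow> (nat \<Rightarrow> nat \<Rightarrow> 'k::field) \<Rightarrow> nat
    \<Rightarrow> (nat list \<Rightarrow> 'k) \<Rightarrow> (nat list \<Rightarrow> 'k)" where
  "thpow d Th p f = (\<lambda>xs. if xs \<in> idx d p then
      (\<Sum>ys\<in>idx d p. (\<Prod>k<p. Th (xs!k) (ys!k)) * f ys) else 0)"

text \<open>Degree-p component of the two-sided ideal of T(V) generated by W \<subseteq> V^(2):
  the span of all a w b with a \<in> V^(i), w \<in> W, b \<in> V^(p-i-2).\<close>
definition ideal_comp :: "nat \<Rightarrow> (nat list \<Rightarrow> 'k::field) set \<Rightarrow> nat \<Rightarrow> (nat list \<Rightarrow> 'k) set" where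
  "ideal_comp d W p = tspan {tmul (i+2) (tmul i a w) b | i a w b.
      i + 2 \<le> p \<and> a \<in> tensors d i \<and> w \<in> W \<and> b \<in> tensors d (p - i - 2)}"

text \<open>Generators of the ideals defining S(V,R) (Im(R - q Id)) and
  Lambda(V,R) (Ker(R - q Id)).\<close>
definition ImRq :: "nat \<Rightarrow> (nat \<Rightarrow> nat \<Rightarrow> nat \<Rightarrow> nat \<Rightarrow> 'k::field) \<Rightarrow> 'k \<Rightarrow> (nat list \<Rightarrow> 'k) set" where
  "ImRq d Rm q = (\<lambda>g. Rop d Rm 2 0 g - tscale q g) ` tensors d 2"

definition KerRq :: "nat \<Rightarrow> (nat \<Rightarrow> nat \<Rightarrow> nat \<Rightarrow> nat \<Rightarrow> 'k::field) \<Rightarrow> 'k \<Rightarrow> (nat list \<Rightarrow> 'k) set" where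
  "KerRq d Rm q = {g \<in> tensors d 2. Rop d Rm 2 0 g - tscale q g = 0}"

end

(* Let B = (R_n ... R_1)(R_(n+1) ... R_2) on V^(n+2), the braid that moves the first two tensor
   factors past the last n.  The braid relations give B R_1 = R_(n+1) B, and the defining property
   of theta, applied once for each of the two factors, gives B (w t) = t (theta (x) theta)(w) for
   w in V (x) V.  Evaluating B R_1 (w t) in both ways and cancelling t <> 0 yields
   (theta (x) theta) R = R (theta (x) theta).  Hence theta (x) theta and its inverse preserve
   Ker(R - q) and Im(R - q), and the tensor powers of theta, which are multiplicative, map the
   ideals generated by them onto themselves degree by degree. *)

theory Submission
  imports Defs
begin

interpretation tvec: module "tscale :: 'k::field \<Rightarrow> (nat list \<Rightarrow> 'k) \<Rightarrow> _"
  by unfold_locales (auto simp: tscale_def fun_eq_iff algebra_simps)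

abbreviation tlinear :: "((nat list \<Rightarrow> 'k::field) \<Rightarrow> (nat list \<Rightarrow> 'k)) \<Rightarrow> bool" where
  "tlinear \<equiv> module_hom tscale tscale"

lemma tlinearI:
  assumes "\<And>f g. L (f + g) = L f + L g" and "\<And>c f. L (tscale c f) = tscale c (L f)"
  shows "tlinear L"
  using assms tvec.module_axioms by (simp add: module_hom_iff)

lemma tlinear_compose: "tlinear L \<Longrightarrow> tlinear M \<Longrightarrow> tlinear (\<lambda>f. L (M f))"
  using module_hom_compose[of tscale tscale M tscale L] by (simp add: comp_def)

lemma tlinear_tmul_left: "tlinear (\<lambda>a. tmul m a b)"
  by (rule tlinearI) (simp_all add: tmul_def tscale_def fun_eq_iff algebra_simps)

lemma tlinear_tmul_right: "tlinear (\<lambda>b. tmul m a b)"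
  by (rule tlinearI) (simp_all add: tmul_def tscale_def fun_eq_iff algebra_simps)

lemma sum_apply_fun: "(\<Sum>a\<in>A. F a) x = (\<Sum>a\<in>A. F a x)"
  by (induct A rule: infinite_finite_induct) auto

subsection \<open>Words and coordinates\<close>

lemma finite_idx: "finite (idx d p)"
proof -
  have "idx d p = {xs. set xs \<subseteq> {..<d} \<and> length xs = p}" by (auto simp: idx_def)
  then show ?thesis by (simp add: finite_lists_length_eq)
qed

lemma idx_add: "xs \<in> idx d (m + k) \<longleftrightarrow> take m xs \<in> idx d m \<and> drop m xs \<in> idx d k"
proof
  assume "xs \<in> idx d (m + k)"
  then show "take m xs \<in> idx d m \<and> drop m xs \<in> idx d k"
    unfolding idx_def by (auto dest: in_set_takeD in_set_dropD)
next
  assume *: "take m xs \<in> idx d m \<and> drop m xs \<in> idx d k"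
  then have "length xs = m + k" unfolding idx_def by (cases "m \<le> length xs") auto
  moreover have "set xs \<subseteq> {..<d}"
    using * set_append[of "take m xs" "drop m xs"] unfolding idx_def by auto
  ultimately show "xs \<in> idx d (m + k)" by (simp add: idx_def)
qed

lemma idx_add_eq_append_image: "idx d (m + k) = (\<lambda>(u, v). u @ v) ` (idx d m \<times> idx d k)"
proof
  show "idx d (m + k) \<subseteq> (\<lambda>(u, v). u @ v) ` (idx d m \<times> idx d k)"
  proof
    fix xs assume "xs \<in> idx d (m + k)"
    then have "(take m xs, drop m xs) \<in> idx d m \<times> idx d k" by (simp add: idx_add)
    then show "xs \<in> (\<lambda>(u, v). u @ v) ` (idx d m \<times> idx d k)"
      by (metis (no_types, lifting) append_take_drop_id case_prod_conv image_eqI)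
  qed
qed (auto simp: idx_def)

lemma inj_on_append_idx: "inj_on (\<lambda>(u, v). u @ v) (idx d m \<times> idx d k)"
  by (auto simp: inj_on_def idx_def)

lemma idx_Suc_eq_Cons_image: "idx d (Suc p) = (\<lambda>(y, ys). y # ys) ` ({..<d} \<times> idx d p)"
proof
  show "idx d (Suc p) \<subseteq> (\<lambda>(y, ys). y # ys) ` ({..<d} \<times> idx d p)"
  proof
    fix xs assume "xs \<in> idx d (Suc p)"
    then obtain y ys where "xs = y # ys" "y < d" "ys \<in> idx d p"
      by (cases xs) (auto simp: idx_def)
    then show "xs \<in> (\<lambda>(y, ys). y # ys) ` ({..<d} \<times> idx d p)" by force
  qed
qed (auto simp: idx_def)

lemma idx_1: "idx d 1 = (\<lambda>k. [k]) ` {..<d}"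
  by (auto simp: idx_def length_Suc_conv)

lemma tensorsD: "f \<in> tensors d p \<Longrightarrow> xs \<notin> idx d p \<Longrightarrow> f xs = 0"
  by (auto simp: tensors_def)

lemma tensors_subspace: "tvec.subspace (tensors d p)"
  by (auto simp: tvec.subspace_def tensors_def tscale_def) (metis add_0)

lemma tmul_tensors: "a \<in> tensors d m \<Longrightarrow> b \<in> tensors d k \<Longrightarrow> tmul m a b \<in> tensors d (m + k)"
  by (auto simp: tensors_def tmul_def idx_add)

lemma tmul_assoc: "tmul (i + j) (tmul i a b) c = tmul i a (tmul j b c)"
  by (simp add: tmul_def fun_eq_iff drop_take add.commute mult.assoc)

lemma tmul_left_cancel:
  assumes "t \<in> tensors d n" "t \<noteq> 0" and "tmul n t g = tmul n t h"
  shows "g = h"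
proof
  fix ys
  obtain xs where xs: "t xs \<noteq> 0" using assms(2) by (auto simp: fun_eq_iff)
  then have "length xs = n" using assms(1) by (auto simp: tensors_def idx_def)
  then have "t xs * g ys = t xs * h ys"
    using fun_cong[OF assms(3), of "xs @ ys"] by (simp add: tmul_def)
  then show "g ys = h ys" using xs by simp
qed

definition basis_tensor :: "nat list \<Rightarrow> nat list \<Rightarrow> 'k::field" where
  "basis_tensor xs = (\<lambda>ys. if ys = xs then 1 else 0)"

lemma basis_tensor_tensors: "xs \<in> idx d p \<Longrightarrow> basis_tensor xs \<in> tensors d p"
  by (auto simp: tensors_def basis_tensor_def)

lemma basis_tensor_append:
  "basis_tensor (xs @ ys) = tmul (length xs) (basis_tensor xs) (basis_tensor ys)"
proof
  fix zs
  have "zs = xs @ ys \<longleftrightarrow> take (length xs) zs = xs \<and> drop (length xs) zs = ys"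
    using append_eq_conv_conj[of xs ys zs] by auto
  then show "basis_tensor (xs @ ys) zs = tmul (length xs) (basis_tensor xs) (basis_tensor ys) zs"
    by (simp add: basis_tensor_def tmul_def)
qed

lemma tensor_expansion:
  assumes "f \<in> tensors d p"
  shows "f = (\<Sum>xs\<in>idx d p. tscale (f xs) (basis_tensor xs))"
proof
  fix ys
  have "(\<Sum>xs\<in>idx d p. tscale (f xs) (basis_tensor xs)) ys = (\<Sum>xs\<in>idx d p. if ys = xs then f xs else 0)"
    by (simp add: sum_apply_fun tscale_def basis_tensor_def if_distrib cong: if_cong)
  also have "\<dots> = f ys"
    using finite_idx assms by (simp add: sum.delta tensorsD)
  finally show "f ys = (\<Sum>xs\<in>idx d p. tscale (f xs) (basis_tensor xs)) ys" by simp
qed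

lemma tlinear_eq_on_tensors:
  assumes "tlinear L" "tlinear M" "\<And>xs. xs \<in> idx d p \<Longrightarrow> L (basis_tensor xs) = M (basis_tensor xs)"
    and "f \<in> tensors d p"
  shows "L f = M f"
proof -
  have expand: "N f = (\<Sum>xs\<in>idx d p. tscale (f xs) (N (basis_tensor xs)))" if "tlinear N" for N
  proof -
    have "N f = N (\<Sum>xs\<in>idx d p. tscale (f xs) (basis_tensor xs))"
      using tensor_expansion[OF assms(4)] by (rule arg_cong)
    then show ?thesis by (simp add: module_hom.sum[OF that] module_hom.scale[OF that])
  qed
  show ?thesis
    using assms(3) by (simp add: expand[OF assms(1)] expand[OF assms(2)])
qed

subsection \<open>The operators \<open>R\<^sub>i\<close>\<close>

lemma Rop_apply:
  "xs \<in> idx d p \<Longrightarrow>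
    Rop d Rm p i f xs = (\<Sum>a<d. \<Sum>b<d. Rm (xs!i) (xs!(i+1)) a b * f (xs[i := a, Suc i := b]))"
  by (simp add: Rop_def)

lemma Rop_outside: "xs \<notin> idx d p \<Longrightarrow> Rop d Rm p i f xs = 0"
  by (simp add: Rop_def)

lemma Rop_tensors: "Rop d Rm p i f \<in> tensors d p"
  by (auto simp: tensors_def Rop_def)

lemma tlinear_Rop: "tlinear (Rop d Rm p i)"
  by (rule tlinearI) (simp_all add: Rop_def tscale_def fun_eq_iff distrib_left sum.distrib
      sum_distrib_left mult.left_commute)

lemma idx_list_update2: "xs \<in> idx d p \<Longrightarrow> a < d \<Longrightarrow> b < d \<Longrightarrow> xs[i := a, j := b] \<in> idx d p"
  by (simp add: idx_def set_update_subsetI)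

lemma Rop_cong:
  assumes "\<And>xs. xs \<in> idx d p \<Longrightarrow> f xs = g xs"
  shows "Rop d Rm p i f = Rop d Rm p i g"
  unfolding Rop_def using assms idx_list_update2 by (intro ext) (auto intro!: sum.cong)

lemma Rop_commute_distant:
  assumes "i + 2 \<le> j"
  shows "Rop d Rm p i (Rop d Rm p j f) = Rop d Rm p j (Rop d Rm p i f)"
proof
  fix xs :: "nat list"
  show "Rop d Rm p i (Rop d Rm p j f) xs = Rop d Rm p j (Rop d Rm p i f) xs"
  proof (cases "xs \<in> idx d p")
    case False then show ?thesis by (simp add: Rop_outside)
  next
    case True
    have ne: "i \<noteq> j" "Suc i \<noteq> j" "i \<noteq> Suc j" "Suc i \<noteq> Suc j" using assms by auto
    have upd: "xs[i := a, Suc i := b, j := c, Suc j := e] = xs[j := c, Suc j := e, i := a, Suc i := b]"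
      for a b c e using ne by (metis list_update_swap)
    let ?F = "\<lambda>a b c e. Rm (xs!i) (xs!(i+1)) a b * (Rm (xs!j) (xs!(j+1)) c e *
                 f (xs[i := a, Suc i := b, j := c, Suc j := e]))"
    have "Rop d Rm p i (Rop d Rm p j f) xs = (\<Sum>a<d. \<Sum>b<d. \<Sum>c<d. \<Sum>e<d. ?F a b c e)"
      using True ne idx_list_update2[OF True] by (simp add: Rop_apply sum_distrib_left)
    also have "\<dots> = (\<Sum>a<d. \<Sum>c<d. \<Sum>b<d. \<Sum>e<d. ?F a b c e)"
      by (rule sum.cong[OF refl], rule sum.swap)
    also have "\<dots> = (\<Sum>c<d. \<Sum>a<d. \<Sum>e<d. \<Sum>b<d. ?F a b c e)"
      by (subst sum.swap) (rule sum.cong[OF refl], rule sum.cong[OF refl], rule sum.swap)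
    also have "\<dots> = (\<Sum>c<d. \<Sum>e<d. \<Sum>a<d. \<Sum>b<d. ?F a b c e)"
      by (rule sum.cong[OF refl], rule sum.swap)
    also have "\<dots> = Rop d Rm p j (Rop d Rm p i f) xs"
      using True ne idx_list_update2[OF True]
      by (simp add: Rop_apply sum_distrib_left upd mult.left_commute)
    finally show ?thesis .
  qed
qed

lemma Rop_window:
  assumes xs: "xs \<in> idx d p" and ip: "i + 3 \<le> p" and zs: "zs \<in> idx d 3" and j: "j < 2"
  shows "Rop d Rm p (i+j) F (take i xs @ zs @ drop (i+3) xs)
       = Rop d Rm 3 j (\<lambda>zs. F (take i xs @ zs @ drop (i+3) xs)) zs"
proof -
  have li: "length (take i xs) = i" and l3: "length zs = 3"
    using xs ip zs by (simp_all add: idx_def)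
  have "take i xs @ zs @ drop (i+3) xs \<in> idx d p"
    using xs ip zs by (auto simp: idx_def dest: in_set_takeD in_set_dropD)
  moreover have "(take i xs @ zs @ drop (i+3) xs) ! (i+j) = zs ! j"
    "(take i xs @ zs @ drop (i+3) xs) ! (i+j+1) = zs ! (j+1)"
    using li l3 j by (simp_all add: nth_append)
  moreover have "(take i xs @ zs @ drop (i+3) xs)[i+j := a, Suc (i+j) := b]
        = take i xs @ zs[j := a, Suc j := b] @ drop (i+3) xs" for a b
    using li l3 j by (simp add: list_update_append)
  ultimately show ?thesis
    using zs by (simp add: Rop_apply)
qed

lemma hecke_braid_3:
  assumes "hecke d Rm q"
  shows "Rop d Rm 3 0 (Rop d Rm 3 1 (Rop d Rm 3 0 g)) = Rop d Rm 3 1 (Rop d Rm 3 0 (Rop d Rm 3 1 g))"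
proof -
  define g' where "g' = (\<lambda>xs. if xs \<in> idx d 3 then g xs else 0)"
  have "g' \<in> tensors d 3" by (auto simp: g'_def tensors_def)
  moreover have "Rop d Rm 3 k g' = Rop d Rm 3 k g" for k
    by (rule Rop_cong) (simp add: g'_def)
  ultimately show ?thesis
    using assms unfolding hecke_def by metis
qed

lemma Rop_braid:
  assumes hk: "hecke d Rm q" and ip: "i + 3 \<le> p"
  shows "Rop d Rm p i (Rop d Rm p (i+1) (Rop d Rm p i f))
       = Rop d Rm p (i+1) (Rop d Rm p i (Rop d Rm p (i+1) f))"
proof
  fix xs :: "nat list"
  show "Rop d Rm p i (Rop d Rm p (i+1) (Rop d Rm p i f)) xs
      = Rop d Rm p (i+1) (Rop d Rm p i (Rop d Rm p (i+1) f)) xs"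
  proof (cases "xs \<in> idx d p")
    case False then show ?thesis by (simp add: Rop_outside)
  next
    case xs: True
    \<comment> \<open>Only the factors \<open>i, i+1, i+2\<close> are involved, where this is the braid relation on \<open>V\<^sup>\<otimes>\<^sup>3\<close>.\<close>
    define E where "E = (\<lambda>zs. take i xs @ zs @ drop (i+3) xs)"
    define z0 where "z0 = take 3 (drop i xs)"
    have Ez0: "E z0 = xs" unfolding E_def z0_def
      by (metis add.commute append_take_drop_id drop_drop)
    have z0: "z0 \<in> idx d 3" using xs ip unfolding z0_def idx_def
      by (auto dest: in_set_takeD in_set_dropD)
    have window0: "Rop d Rm p i F (E zs) = Rop d Rm 3 0 (\<lambda>zs. F (E zs)) zs"
      and window1: "Rop d Rm p (i+1) F (E zs) = Rop d Rm 3 1 (\<lambda>zs. F (E zs)) zs"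
      if "zs \<in> idx d 3" for F zs
      using Rop_window[OF xs ip that, of 0] Rop_window[OF xs ip that, of 1] unfolding E_def by simp_all
    have window0': "Rop d Rm 3 k (\<lambda>zs. Rop d Rm p i F (E zs)) = Rop d Rm 3 k (Rop d Rm 3 0 (\<lambda>zs. F (E zs)))"
      and window1': "Rop d Rm 3 k (\<lambda>zs. Rop d Rm p (i+1) F (E zs)) = Rop d Rm 3 k (Rop d Rm 3 1 (\<lambda>zs. F (E zs)))"
      for k F by (rule Rop_cong, erule window0, rule Rop_cong, erule window1)
    have "Rop d Rm p i (Rop d Rm p (i+1) (Rop d Rm p i f)) xs
        = Rop d Rm 3 0 (Rop d Rm 3 1 (Rop d Rm 3 0 (\<lambda>zs. f (E zs)))) z0"
      using window0[OF z0] Ez0 by (simp only: window0' window1')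
    also have "\<dots> = Rop d Rm 3 1 (Rop d Rm 3 0 (Rop d Rm 3 1 (\<lambda>zs. f (E zs)))) z0"
      by (simp only: hecke_braid_3[OF hk])
    also have "\<dots> = Rop d Rm p (i+1) (Rop d Rm p i (Rop d Rm p (i+1) f)) xs"
      using window1[OF z0] Ez0 by (simp only: window0' window1')
    finally show ?thesis .
  qed
qed

lemma Rop_tmul_left:
  assumes "Suc i < m" and "g \<in> tensors d k"
  shows "Rop d Rm (m+k) i (tmul m f g) = tmul m (Rop d Rm m i f) g"
proof
  fix xs :: "nat list"
  show "Rop d Rm (m+k) i (tmul m f g) xs = tmul m (Rop d Rm m i f) g xs"
  proof (cases "xs \<in> idx d (m+k)")
    case True
    then have "take m xs \<in> idx d m" by (simp add: idx_add)
    moreover have "take m xs ! i = xs ! i" "take m xs ! Suc i = xs ! Suc i" using assms(1) by auto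
    ultimately show ?thesis using True assms(1)
      by (simp add: Rop_apply tmul_def take_update_swap sum_distrib_right mult.assoc)
  next
    case False
    then have "take m xs \<notin> idx d m \<or> drop m xs \<notin> idx d k" by (simp add: idx_add)
    then show ?thesis using False assms(2) by (auto simp: Rop_outside tmul_def tensorsD)
  qed
qed

lemma Rop_tmul_right:
  assumes "Suc i < k" and "f \<in> tensors d m"
  shows "Rop d Rm (m+k) (m+i) (tmul m f g) = tmul m f (Rop d Rm k i g)"
proof
  fix xs :: "nat list"
  show "Rop d Rm (m+k) (m+i) (tmul m f g) xs = tmul m f (Rop d Rm k i g) xs"
  proof (cases "xs \<in> idx d (m+k)")
    case True
    then have "drop m xs \<in> idx d k" by (simp add: idx_add)
    moreover have "drop m xs ! i = xs ! (m+i)" "drop m xs ! Suc i = xs ! Suc (m+i)"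
      using True by (simp_all add: idx_def)
    moreover have "drop m (xs[m+i := a, Suc (m+i) := b]) = (drop m xs)[i := a, Suc i := b]" for a b
      by (simp add: drop_update_swap)
    ultimately show ?thesis using True assms(1)
      by (simp add: Rop_apply tmul_def sum_distrib_left mult.left_commute)
  next
    case False
    then have "take m xs \<notin> idx d m \<or> drop m xs \<notin> idx d k" by (simp add: idx_add)
    then show ?thesis using False assms(2) by (auto simp: Rop_outside tmul_def tensorsD)
  qed
qed

subsection \<open>Braid words\<close>

definition sweep :: "(nat \<Rightarrow> 'a \<Rightarrow> 'a) \<Rightarrow> nat \<Rightarrow> nat \<Rightarrow> 'a \<Rightarrow> 'a" where
  "sweep s a b f = foldl (\<lambda>g i. s i g) f [a..<b]"

lemma sweep_trivial: "b \<le> a \<Longrightarrow> sweep s a b f = f"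
  by (simp add: sweep_def)

lemma sweep_Suc: "a \<le> b \<Longrightarrow> sweep s a (Suc b) f = s b (sweep s a b f)"
  by (simp add: sweep_def)

lemma sweep_first: "a < b \<Longrightarrow> sweep s a b f = sweep s (Suc a) b (s a f)"
  by (simp add: sweep_def upt_rec)

lemma Rchain_eq_sweep: "Rchain d Rm n = sweep (Rop d Rm (Suc n)) 0 n"
  by (simp add: Rchain_def sweep_def fun_eq_iff)

lemma sweep_commute:
  assumes "\<And>i g. a \<le> i \<Longrightarrow> i < b \<Longrightarrow> s i (s j g) = s j (s i g)"
  shows "sweep s a b (s j f) = s j (sweep s a b f)"
  using assms
proof (induction b)
  case (Suc b)
  then show ?case by (cases "a \<le> b") (simp_all add: sweep_Suc sweep_trivial)
qed (simp add: sweep_trivial)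

lemma tlinear_sweep: "(\<And>i. tlinear (s i)) \<Longrightarrow> tlinear (sweep s a b)"
proof (induction b)
  case 0
  have "sweep s a 0 = (\<lambda>f. f)" by (simp add: fun_eq_iff sweep_trivial)
  then show ?case by (simp add: tvec.module_hom_ident)
next
  case (Suc b)
  show ?case
  proof (cases "a \<le> b")
    case True
    then have "sweep s a (Suc b) = (\<lambda>f. s b (sweep s a b f))" by (simp add: fun_eq_iff sweep_Suc)
    then show ?thesis using Suc by (simp add: tlinear_compose)
  next
    case False
    then have "sweep s a (Suc b) = (\<lambda>f. f)" by (simp add: fun_eq_iff sweep_trivial)
    then show ?thesis by (simp add: tvec.module_hom_ident)
  qed
qed

lemma sweep_tmul_left:
  assumes "b < m" and "g \<in> tensors d k"
  shows "sweep (Rop d Rm (m+k)) a b (tmul m f g) = tmul m (sweep (Rop d Rm m) a b f) g"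
  using assms(1)
proof (induction b)
  case (Suc b)
  then show ?case
    using assms(2) by (cases "a \<le> b") (simp_all add: sweep_Suc sweep_trivial Rop_tmul_left)
qed (simp add: sweep_trivial)

lemma sweep_tmul_right:
  assumes "b < k" and "f \<in> tensors d m"
  shows "sweep (Rop d Rm (m+k)) (m+a) (m+b) (tmul m f g) = tmul m f (sweep (Rop d Rm k) a b g)"
  using assms(1)
proof (induction b)
  case (Suc b)
  then show ?case
    using assms(2)
    by (cases "a \<le> b") (simp_all add: sweep_Suc[of "m+a" "m+b"] sweep_Suc[of a b] sweep_trivial Rop_tmul_right)
qed (simp add: sweep_trivial)

text \<open>For \<open>s = Rop d Rm (N + 2)\<close> this is \<open>(R_N \<cdots> R_1)(R_(N+1) \<cdots> R_2)\<close> in the 1-based indexing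
  of the informal statement.\<close>

definition block_swap :: "(nat \<Rightarrow> 'a \<Rightarrow> 'a) \<Rightarrow> nat \<Rightarrow> 'a \<Rightarrow> 'a" where
  "block_swap s N f = sweep s 0 N (sweep s 1 (Suc N) f)"

locale braid_relations =
  fixes s :: "nat \<Rightarrow> 'a \<Rightarrow> 'a" and N :: nat
  assumes commute_distant: "\<And>i j g. i + 2 \<le> j \<Longrightarrow> j \<le> N \<Longrightarrow> s i (s j g) = s j (s i g)"
    and braid: "\<And>i g. i + 1 \<le> N \<Longrightarrow> s i (s (i+1) (s i g)) = s (i+1) (s i (s (i+1) g))"
begin

lemma sweep_conj:
  assumes "1 \<le> j" "j < m" "m \<le> N + 1"
  shows "sweep s 0 m (s j f) = s (j-1) (sweep s 0 m f)"
  using assms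
proof (induction m arbitrary: j)
  case (Suc m)
  show ?case
  proof (cases "j < m")
    case True
    then have "sweep s 0 (Suc m) (s j f) = s m (s (j-1) (sweep s 0 m f))"
      using Suc by (simp add: sweep_Suc)
    also have "\<dots> = s (j-1) (s m (sweep s 0 m f))"
      using True Suc.prems by (intro commute_distant[symmetric]) auto
    finally show ?thesis by (simp add: sweep_Suc)
  next
    case False
    then obtain m' where m: "j = m" "m = Suc m'" using Suc.prems by (cases m) auto
    have "sweep s 0 m' (s m f) = s m (sweep s 0 m' f)"
      by (rule sweep_commute) (rule commute_distant, use m Suc.prems in auto)
    then have "sweep s 0 (Suc m) (s j f) = s m (s m' (s m (sweep s 0 m' f)))"
      using m by (simp add: sweep_Suc)
    also have "\<dots> = s m' (s m (s m' (sweep s 0 m' f)))"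
      using braid[of m' "sweep s 0 m' f"] m Suc.prems by simp
    also have "\<dots> = s (j-1) (sweep s 0 (Suc m) f)"
      using m by (simp add: sweep_Suc)
    finally show ?thesis .
  qed
qed simp

lemma sweep_sweep:
  assumes "k < m" "m \<le> N + 1"
  shows "sweep s 0 m (sweep s 1 (Suc k) f) = sweep s 0 k (sweep s 0 m f)"
  using assms
proof (induction k)
  case (Suc k)
  have "sweep s 0 m (sweep s 1 (Suc (Suc k)) f) = sweep s 0 m (s (Suc k) (sweep s 1 (Suc k) f))"
    by (simp add: sweep_Suc)
  also have "\<dots> = s k (sweep s 0 m (sweep s 1 (Suc k) f))"
    using sweep_conj[of "Suc k" m] Suc.prems by simp
  also have "\<dots> = sweep s 0 (Suc k) (sweep s 0 m f)"
    using Suc by (simp add: sweep_Suc)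
  finally show ?case .
qed (simp add: sweep_trivial)

lemma block_swap_conj: "block_swap s N (s 0 f) = s N (block_swap s N f)"
proof -
  have "block_swap s N (s 0 f) = sweep s 0 N (sweep s 0 (Suc N) f)"
    by (simp add: block_swap_def sweep_first)
  also have "\<dots> = sweep s 0 (Suc N) (sweep s 1 (Suc N) f)"
    using sweep_sweep[of N "Suc N" f] by simp
  also have "\<dots> = s N (block_swap s N f)"
    by (simp add: block_swap_def sweep_Suc)
  finally show ?thesis .
qed

end

lemma braid_relations_Rop:
  assumes "hecke d Rm q"
  shows "braid_relations (Rop d Rm (N+2)) N"
proof
  fix i j :: nat and g
  assume "i + 2 \<le> j"
  then show "Rop d Rm (N+2) i (Rop d Rm (N+2) j g) = Rop d Rm (N+2) j (Rop d Rm (N+2) i g)"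
    by (rule Rop_commute_distant)
next
  fix i :: nat and g
  assume "i + 1 \<le> N"
  then show "Rop d Rm (N+2) i (Rop d Rm (N+2) (i+1) (Rop d Rm (N+2) i g))
      = Rop d Rm (N+2) (i+1) (Rop d Rm (N+2) i (Rop d Rm (N+2) (i+1) g))"
    by (intro Rop_braid[OF assms]) simp
qed

subsection \<open>The tensor powers of \<open>\<theta>\<close>\<close>

lemma thpow_apply:
  "xs \<in> idx d p \<Longrightarrow> thpow d M p f xs = (\<Sum>ys\<in>idx d p. (\<Prod>k<p. M (xs!k) (ys!k)) * f ys)"
  by (simp add: thpow_def)

lemma thpow_outside: "xs \<notin> idx d p \<Longrightarrow> thpow d M p f xs = 0"
  by (simp add: thpow_def)

lemma thpow_tensors: "thpow d M p f \<in> tensors d p"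
  by (auto simp: tensors_def thpow_def)

lemma tlinear_thpow: "tlinear (thpow d M p)"
  by (rule tlinearI) (simp_all add: thpow_def tscale_def fun_eq_iff distrib_left sum.distrib
      sum_distrib_left mult.left_commute)

lemma thpow_1_apply:
  assumes "x < d"
  shows "thpow d M 1 f [x] = (\<Sum>k<d. M x k * f [k])"
proof -
  have "[x] \<in> idx d 1" using assms by (simp add: idx_def)
  then have "thpow d M 1 f [x] = (\<Sum>ys\<in>(\<lambda>k. [k]) ` {..<d}. (\<Prod>l<1. M ([x]!l) (ys!l)) * f ys)"
    by (simp only: thpow_apply idx_1)
  also have "\<dots> = (\<Sum>k<d. M x k * f [k])"
    by (simp add: sum.reindex inj_on_def)
  finally show ?thesis .
qed

lemma prod_lessThan_add:
  fixes g :: "nat \<Rightarrow> 'c::comm_monoid_mult"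
  shows "(\<Prod>l<m+k. g l) = (\<Prod>l<m. g l) * (\<Prod>l<k. g (m + l))"
  by (induction k) (simp_all add: mult.assoc)

lemma thpow_tmul: "thpow d M (m + k) (tmul m a b) = tmul m (thpow d M m a) (thpow d M k b)"
proof
  fix xs :: "nat list"
  show "thpow d M (m + k) (tmul m a b) xs = tmul m (thpow d M m a) (thpow d M k b) xs"
  proof (cases "xs \<in> idx d (m + k)")
    case False
    then have "take m xs \<notin> idx d m \<or> drop m xs \<notin> idx d k" by (simp add: idx_add)
    then show ?thesis using False by (auto simp: thpow_outside tmul_def)
  next
    case True
    let ?x = "take m xs" and ?y = "drop m xs"
    have "length xs = m + k" using True by (simp add: idx_def)
    then have split: "(\<Prod>l<m+k. M (xs!l) ((u @ v)!l)) * tmul m a b (u @ v)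
        = ((\<Prod>l<m. M (?x!l) (u!l)) * a u) * ((\<Prod>l<k. M (?y!l) (v!l)) * b v)"
      if "u \<in> idx d m" for u v
      using that by (simp add: prod_lessThan_add nth_append idx_def tmul_def mult_ac)
    have "thpow d M (m + k) (tmul m a b) xs
        = (\<Sum>(u, v)\<in>idx d m \<times> idx d k. (\<Prod>l<m+k. M (xs!l) ((u @ v)!l)) * tmul m a b (u @ v))"
      unfolding thpow_apply[OF True] idx_add_eq_append_image sum.reindex[OF inj_on_append_idx]
      by (simp add: case_prod_beta)
    also have "\<dots> = (\<Sum>(u, v)\<in>idx d m \<times> idx d k. ((\<Prod>l<m. M (?x!l) (u!l)) * a u) * ((\<Prod>l<k. M (?y!l) (v!l)) * b v))"
      by (rule sum.cong) (auto simp: split)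
    also have "\<dots> = (\<Sum>u\<in>idx d m. (\<Prod>l<m. M (?x!l) (u!l)) * a u) * (\<Sum>v\<in>idx d k. (\<Prod>l<k. M (?y!l) (v!l)) * b v)"
      by (simp only: sum_product sum.cartesian_product)
    also have "\<dots> = tmul m (thpow d M m a) (thpow d M k b) xs"
      using True by (simp add: idx_add tmul_def thpow_apply)
    finally show ?thesis .
  qed
qed

definition mat_mult :: "nat \<Rightarrow> (nat \<Rightarrow> nat \<Rightarrow> 'k::field) \<Rightarrow> (nat \<Rightarrow> nat \<Rightarrow> 'k) \<Rightarrow> nat \<Rightarrow> nat \<Rightarrow> 'k" where
  "mat_mult d A B = (\<lambda>x z. \<Sum>y<d. A x y * B y z)"

definition identity_matrix :: "nat \<Rightarrow> (nat \<Rightarrow> nat \<Rightarrow> 'k::field) \<Rightarrow> bool" where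
  "identity_matrix d M \<longleftrightarrow> (\<forall>x<d. \<forall>z<d. M x z = (if x = z then 1 else 0))"

lemma sum_idx_prod:
  fixes F :: "nat \<Rightarrow> nat \<Rightarrow> 'c::comm_semiring_1"
  shows "(\<Sum>ys\<in>idx d p. \<Prod>l<p. F l (ys!l)) = (\<Prod>l<p. \<Sum>y<d. F l y)"
proof (induction p arbitrary: F)
  case 0
  have "idx d 0 = {[]}" by (auto simp: idx_def)
  then show ?case by simp
next
  case (Suc p)
  have inj: "inj_on (\<lambda>(y, ys). y # ys) ({..<d} \<times> idx d p)" by (auto simp: inj_on_def)
  have "(\<Sum>ys\<in>idx d (Suc p). \<Prod>l<Suc p. F l (ys!l))
      = (\<Sum>(y, ys)\<in>{..<d} \<times> idx d p. F 0 y * (\<Prod>l<p. F (Suc l) (ys ! l)))"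
    unfolding idx_Suc_eq_Cons_image sum.reindex[OF inj]
    by (simp add: case_prod_beta prod.lessThan_Suc_shift del: prod.lessThan_Suc)
  also have "\<dots> = (\<Sum>y<d. F 0 y) * (\<Sum>ys\<in>idx d p. \<Prod>l<p. F (Suc l) (ys ! l))"
    by (simp only: sum_product sum.cartesian_product)
  also have "\<dots> = (\<Prod>l<Suc p. \<Sum>y<d. F l y)"
    using Suc[of "\<lambda>l. F (Suc l)"] by (simp add: prod.lessThan_Suc_shift del: prod.lessThan_Suc)
  finally show ?case .
qed

lemma thpow_thpow: "thpow d A p (thpow d B p f) = thpow d (mat_mult d A B) p f"
proof
  fix xs :: "nat list"
  show "thpow d A p (thpow d B p f) xs = thpow d (mat_mult d A B) p f xs"
  proof (cases "xs \<in> idx d p")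
    case False then show ?thesis by (simp add: thpow_outside)
  next
    case True
    have "thpow d A p (thpow d B p f) xs
       = (\<Sum>ys\<in>idx d p. \<Sum>zs\<in>idx d p. (\<Prod>k<p. A (xs!k) (ys!k)) * ((\<Prod>k<p. B (ys!k) (zs!k)) * f zs))"
      using True by (simp add: thpow_apply sum_distrib_left)
    also have "\<dots> = (\<Sum>zs\<in>idx d p. (\<Sum>ys\<in>idx d p. \<Prod>k<p. A (xs!k) (ys!k) * B (ys!k) (zs!k)) * f zs)"
      by (subst sum.swap) (simp add: prod.distrib mult.assoc sum_distrib_right)
    also have "\<dots> = thpow d (mat_mult d A B) p f xs"
      using True sum_idx_prod[where F="\<lambda>l y. A (xs!l) y * B y (_ ! l)"]
      by (simp add: thpow_apply mat_mult_def)
    finally show ?thesis .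
  qed
qed

lemma thpow_identity_matrix:
  assumes "identity_matrix d C" and "f \<in> tensors d p"
  shows "thpow d C p f = f"
proof
  fix xs :: "nat list"
  show "thpow d C p f xs = f xs"
  proof (cases "xs \<in> idx d p")
    case False then show ?thesis using assms(2) by (simp add: thpow_outside tensorsD)
  next
    case True
    have "(\<Prod>k<p. C (xs!k) (zs!k)) = (if xs = zs then 1 else 0)" if zs: "zs \<in> idx d p" for zs
    proof -
      have "C (xs!k) (zs!k) = (if xs!k = zs!k then 1 else 0)" if "k < p" for k
      proof -
        have "xs!k \<in> set xs" "zs!k \<in> set zs" using True zs that by (simp_all add: idx_def)
        then have "xs!k < d" "zs!k < d" using True zs by (auto simp: idx_def)
        then show ?thesis using assms(1) unfolding identity_matrix_def by simp
      qed
      moreover have "xs = zs \<longleftrightarrow> (\<forall>k<p. xs!k = zs!k)"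
        using True zs by (auto simp: idx_def list_eq_iff_nth_eq)
      ultimately show ?thesis by (auto intro: prod_zero)
    qed
    then have "thpow d C p f xs = (\<Sum>zs\<in>idx d p. if xs = zs then f zs else 0)"
      using True by (auto simp: thpow_apply intro!: sum.cong)
    also have "\<dots> = f xs" using True finite_idx by (simp add: sum.delta)
    finally show ?thesis .
  qed
qed

lemma thpow_1_basis_tensor:
  assumes "x < d" "z < d"
  shows "thpow d M 1 (basis_tensor [z]) [x] = M x z"
proof -
  have "(\<Sum>k<d. M x k * basis_tensor [z] [k]) = (\<Sum>k<d. if k = z then M x k else 0)"
    by (intro sum.cong) (auto simp: basis_tensor_def)
  then show ?thesis
    unfolding thpow_1_apply[OF assms(1)] using assms(2) by simp
qed

lemma bij_thpow_1_obtains_inverse_matrix: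
  assumes bij: "bij_betw (thpow d M 1) (tensors d 1) (tensors d 1)"
  obtains S where "identity_matrix d (mat_mult d M S)" and "identity_matrix d (mat_mult d S M)"
proof -
  define S where "S = (\<lambda>k j. inv_into (tensors d 1) (thpow d M 1) (basis_tensor [j]) [k])"
  have basis: "basis_tensor [j] \<in> tensors d 1" if "j < d" for j
    using that by (simp add: basis_tensor_tensors idx_def)
  have MS: "identity_matrix d (mat_mult d M S)"
    unfolding identity_matrix_def
  proof (intro allI impI)
    fix x z assume xz: "x < d" "z < d"
    have "thpow d M 1 (inv_into (tensors d 1) (thpow d M 1) (basis_tensor [z])) [x] = basis_tensor [z] [x]"
      using bij_betw_inv_into_right[OF bij basis[OF xz(2)]] by simp
    then show "mat_mult d M S x z = (if x = z then 1 else 0)"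
      unfolding thpow_1_apply[OF xz(1)] by (simp add: mat_mult_def S_def basis_tensor_def)
  qed
  have SM: "thpow d (mat_mult d S M) 1 f = f" if f: "f \<in> tensors d 1" for f
  proof -
    have "thpow d M 1 (thpow d (mat_mult d S M) 1 f) = thpow d (mat_mult d M S) 1 (thpow d M 1 f)"
      by (simp add: thpow_thpow[symmetric])
    also have "\<dots> = thpow d M 1 f"
      by (rule thpow_identity_matrix[OF MS thpow_tensors])
    finally show ?thesis
      using bij f thpow_tensors unfolding bij_betw_def by (blast dest: inj_onD)
  qed
  have "identity_matrix d (mat_mult d S M)"
    unfolding identity_matrix_def
  proof (intro allI impI)
    fix x z assume "x < d" "z < d"
    then show "mat_mult d S M x z = (if x = z then 1 else 0)"
      using SM[OF basis[of z]] thpow_1_basis_tensor[of x d z "mat_mult d S M"]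
      by (simp add: basis_tensor_def)
  qed
  with MS that show ?thesis by blast
qed

subsection \<open>\<open>\<theta> \<otimes> \<theta>\<close> commutes with \<open>R\<close>\<close>

lemma tlinear_block_swap:
  assumes "\<And>i. tlinear (s i)"
  shows "tlinear (block_swap s N)"
proof -
  have "block_swap s N = (\<lambda>f. sweep s 0 N (sweep s 1 (Suc N) f))"
    by (simp add: fun_eq_iff block_swap_def)
  then show ?thesis
    using tlinear_compose[OF tlinear_sweep tlinear_sweep, OF assms assms] by simp
qed

lemma block_swap_tmul_tmul:
  assumes theta: "\<forall>v \<in> tensors d 1. Rchain d Rm n (tmul 1 v t) = tmul n t (thpow d Th 1 v)"
    and v: "v1 \<in> tensors d 1" "v2 \<in> tensors d 1"
  shows "block_swap (Rop d Rm (n+2)) n (tmul 1 v1 (tmul 1 v2 t))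
    = tmul n t (tmul 1 (thpow d Th 1 v1) (thpow d Th 1 v2))"
proof -
  let ?\<theta> = "thpow d Th 1"
  have "sweep (Rop d Rm (n+2)) 1 (Suc n) (tmul 1 v1 (tmul 1 v2 t)) = tmul 1 v1 (tmul n t (?\<theta> v2))"
    using sweep_tmul_right[of n "Suc n" v1 d 1 Rm 0 "tmul 1 v2 t"] theta v
    by (simp add: Rchain_eq_sweep)
  also have "\<dots> = tmul (Suc n) (tmul 1 v1 t) (?\<theta> v2)"
    by (simp only: Suc_eq_plus1_left tmul_assoc)
  finally have first: "sweep (Rop d Rm (n+2)) 1 (Suc n) (tmul 1 v1 (tmul 1 v2 t))
      = tmul (Suc n) (tmul 1 v1 t) (?\<theta> v2)" .
  have "sweep (Rop d Rm (n+2)) 0 n (tmul (Suc n) (tmul 1 v1 t) (?\<theta> v2))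
      = tmul (Suc n) (tmul n t (?\<theta> v1)) (?\<theta> v2)"
    using sweep_tmul_left[of n "Suc n" "?\<theta> v2" d 1 Rm 0 "tmul 1 v1 t"] theta v thpow_tensors[of d Th 1 v2]
    by (simp add: Rchain_eq_sweep)
  also have "\<dots> = tmul n t (tmul 1 (?\<theta> v1) (?\<theta> v2))"
    by (simp only: Suc_eq_plus1 tmul_assoc)
  finally show ?thesis
    using first by (simp add: block_swap_def)
qed

lemma block_swap_tmul_theta:
  assumes theta: "\<forall>v \<in> tensors d 1. Rchain d Rm n (tmul 1 v t) = tmul n t (thpow d Th 1 v)"
    and w: "w \<in> tensors d 2"
  shows "block_swap (Rop d Rm (n+2)) n (tmul 2 w t) = tmul n t (thpow d Th 2 w)"
proof (rule tlinear_eq_on_tensors[OF _ _ _ w])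
  let ?B = "block_swap (Rop d Rm (n+2)) n" and ?\<theta> = "thpow d Th 1"
  show "tlinear (\<lambda>w. ?B (tmul 2 w t))"
    by (rule tlinear_compose[OF tlinear_block_swap[OF tlinear_Rop] tlinear_tmul_left])
  show "tlinear (\<lambda>w. tmul n t (thpow d Th 2 w))"
    by (rule tlinear_compose[OF tlinear_tmul_right tlinear_thpow])
  fix xs assume "xs \<in> idx d 2"
  then obtain a b where ab: "xs = [a] @ [b]" "a < d" "b < d"
    by (auto simp: idx_def numeral_2_eq_2 length_Suc_conv)
  then have "basis_tensor [a] \<in> tensors d 1" "basis_tensor [b] \<in> tensors d 1"
    by (simp_all add: basis_tensor_tensors idx_def)
  moreover have "tmul 2 (basis_tensor xs) t = tmul 1 (basis_tensor [a]) (tmul 1 (basis_tensor [b]) t)"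
    using tmul_assoc[of 1 1]
    by (simp add: ab(1) basis_tensor_append numeral_2_eq_2 del: append_Cons append_Nil)
  moreover have "thpow d Th 2 (basis_tensor xs) = tmul 1 (?\<theta> (basis_tensor [a])) (?\<theta> (basis_tensor [b]))"
    using thpow_tmul[of d Th 1 1]
    by (simp add: ab(1) basis_tensor_append numeral_2_eq_2 del: append_Cons append_Nil)
  ultimately show "?B (tmul 2 (basis_tensor xs) t) = tmul n t (thpow d Th 2 (basis_tensor xs))"
    using block_swap_tmul_tmul[OF theta, of "basis_tensor [a]" "basis_tensor [b]"] by simp
qed

lemma thpow_Rop_commute:
  assumes hk: "hecke d Rm q" and t: "t \<in> tensors d n" "t \<noteq> 0"
    and theta: "\<forall>v \<in> tensors d 1. Rchain d Rm n (tmul 1 v t) = tmul n t (thpow d Th 1 v)"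
    and f: "f \<in> tensors d 2"
  shows "thpow d Th 2 (Rop d Rm 2 0 f) = Rop d Rm 2 0 (thpow d Th 2 f)"
proof (rule tmul_left_cancel[OF t])
  let ?s = "Rop d Rm (n+2)"
  have "tmul n t (thpow d Th 2 (Rop d Rm 2 0 f)) = block_swap ?s n (tmul 2 (Rop d Rm 2 0 f) t)"
    using block_swap_tmul_theta[OF theta Rop_tensors] by simp
  also have "tmul 2 (Rop d Rm 2 0 f) t = ?s 0 (tmul 2 f t)"
    using Rop_tmul_left[of 0 2 t d n Rm f] t(1) by (simp add: add.commute)
  also have "block_swap ?s n (?s 0 (tmul 2 f t)) = ?s n (block_swap ?s n (tmul 2 f t))"
    by (rule braid_relations.block_swap_conj[OF braid_relations_Rop[OF hk]])
  also have "\<dots> = ?s n (tmul n t (thpow d Th 2 f))"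
    using block_swap_tmul_theta[OF theta f] by simp
  also have "\<dots> = tmul n t (Rop d Rm 2 0 (thpow d Th 2 f))"
    using Rop_tmul_right[of 0 2 t d n Rm "thpow d Th 2 f"] t(1) by simp
  finally show "tmul n t (thpow d Th 2 (Rop d Rm 2 0 f)) = tmul n t (Rop d Rm 2 0 (thpow d Th 2 f))" .
qed

subsection \<open>The ideals defining \<open>\<Lambda>(V, R)\<close> and \<open>S(V, R)\<close>\<close>

lemma thpow_inverse:
  assumes "identity_matrix d (mat_mult d A B)" and "f \<in> tensors d p"
  shows "thpow d A p (thpow d B p f) = f"
  using thpow_identity_matrix[OF assms] by (simp add: thpow_thpow)

lemma thpow_Rop_commute_inverse:
  assumes AB: "identity_matrix d (mat_mult d A B)" and BA: "identity_matrix d (mat_mult d B A)"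
    and comm: "\<forall>f \<in> tensors d 2. thpow d A 2 (Rop d Rm 2 0 f) = Rop d Rm 2 0 (thpow d A 2 f)"
    and f: "f \<in> tensors d 2"
  shows "thpow d B 2 (Rop d Rm 2 0 f) = Rop d Rm 2 0 (thpow d B 2 f)"
proof -
  have "Rop d Rm 2 0 f = thpow d A 2 (Rop d Rm 2 0 (thpow d B 2 f))"
    using comm thpow_tensors[of d B 2 f] thpow_inverse[OF AB f] by simp
  then have "thpow d B 2 (Rop d Rm 2 0 f) = thpow d B 2 (thpow d A 2 (Rop d Rm 2 0 (thpow d B 2 f)))"
    by simp
  also have "\<dots> = Rop d Rm 2 0 (thpow d B 2 f)"
    by (rule thpow_inverse[OF BA Rop_tensors])
  finally show ?thesis .
qed

lemma thpow_KerRq_subset: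
  assumes "\<forall>f \<in> tensors d 2. thpow d M 2 (Rop d Rm 2 0 f) = Rop d Rm 2 0 (thpow d M 2 f)"
  shows "thpow d M 2 ` KerRq d Rm q \<subseteq> KerRq d Rm q"
proof clarify
  fix w assume "w \<in> KerRq d Rm q"
  then have w: "w \<in> tensors d 2" "Rop d Rm 2 0 w - tscale q w = 0" by (auto simp: KerRq_def)
  have "Rop d Rm 2 0 (thpow d M 2 w) - tscale q (thpow d M 2 w) = thpow d M 2 (Rop d Rm 2 0 w - tscale q w)"
    using assms w(1) tlinear_thpow[of d M 2] by (simp add: module_hom.diff module_hom.scale)
  then show "thpow d M 2 w \<in> KerRq d Rm q"
    using w(2) tlinear_thpow[of d M 2] thpow_tensors by (simp add: KerRq_def module_hom.zero)
qed

lemma thpow_ImRq_subset: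
  assumes "\<forall>f \<in> tensors d 2. thpow d M 2 (Rop d Rm 2 0 f) = Rop d Rm 2 0 (thpow d M 2 f)"
  shows "thpow d M 2 ` ImRq d Rm q \<subseteq> ImRq d Rm q"
proof clarify
  fix w assume "w \<in> ImRq d Rm q"
  then obtain h where h: "h \<in> tensors d 2" "w = Rop d Rm 2 0 h - tscale q h"
    unfolding ImRq_def by blast
  then have "thpow d M 2 w = Rop d Rm 2 0 (thpow d M 2 h) - tscale q (thpow d M 2 h)"
    using assms tlinear_thpow[of d M 2] by (simp add: module_hom.diff module_hom.scale)
  then show "thpow d M 2 w \<in> ImRq d Rm q"
    unfolding ImRq_def by (rule rev_image_eqI[OF thpow_tensors])
qed

lemma ideal_comp_tensors:
  fixes W :: "(nat list \<Rightarrow> 'k::field) set"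
  assumes "W \<subseteq> tensors d 2"
  shows "ideal_comp d W p \<subseteq> tensors d p"
  unfolding ideal_comp_def tspan_def
proof (rule tvec.span_minimal[OF _ tensors_subspace], clarify)
  fix i :: nat and a w b :: "nat list \<Rightarrow> 'k"
  assume h: "i + 2 \<le> p" "a \<in> tensors d i" "w \<in> W" "b \<in> tensors d (p - i - 2)"
  define k where "k = p - i - 2"
  have p: "p = (i + 2) + k" using h(1) by (simp add: k_def)
  show "tmul (i + 2) (tmul i a w) b \<in> tensors d p"
    unfolding p using h assms by (intro tmul_tensors) (auto simp: k_def)
qed

lemma thpow_ideal_comp_subset:
  fixes W :: "(nat list \<Rightarrow> 'k::field) set"
  assumes "thpow d M 2 ` W \<subseteq> W"
  shows "thpow d M p ` ideal_comp d W p \<subseteq> ideal_comp d W p"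
proof -
  define G where "G = {tmul (i+2) (tmul i a w) b | i a w b.
      i + 2 \<le> p \<and> a \<in> tensors d i \<and> w \<in> W \<and> b \<in> tensors d (p - i - 2)}"
  have "thpow d M p ` G \<subseteq> G"
  proof
    fix y assume "y \<in> thpow d M p ` G"
    then obtain i a w b where y: "y = thpow d M p (tmul (i+2) (tmul i a w) b)"
      and h: "i + 2 \<le> p" "a \<in> tensors d i" "w \<in> W" "b \<in> tensors d (p - i - 2)"
      unfolding G_def by blast
    define k where "k = p - i - 2"
    have p: "p = (i + 2) + k" using h(1) by (simp add: k_def)
    have "y = tmul (i+2) (tmul i (thpow d M i a) (thpow d M 2 w)) (thpow d M k b)"
      unfolding y p thpow_tmul ..
    then show "y \<in> G"
      unfolding G_def k_def using h assms thpow_tensors by blast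
  qed
  then have "tvec.span (thpow d M p ` G) \<subseteq> tvec.span G"
    by (rule tvec.span_mono)
  moreover have "tvec.span (thpow d M p ` G) = thpow d M p ` tvec.span G"
    by (rule module_hom.span_image[OF tlinear_thpow])
  ultimately show ?thesis
    unfolding ideal_comp_def tspan_def G_def[symmetric] by simp
qed

lemma thpow_ideal_comp_eq:
  assumes AB: "identity_matrix d (mat_mult d A B)"
    and W: "W \<subseteq> tensors d 2" "thpow d A 2 ` W \<subseteq> W" "thpow d B 2 ` W \<subseteq> W"
  shows "thpow d A p ` ideal_comp d W p = ideal_comp d W p"
proof
  show "thpow d A p ` ideal_comp d W p \<subseteq> ideal_comp d W p"
    by (rule thpow_ideal_comp_subset[OF W(2)])
  show "ideal_comp d W p \<subseteq> thpow d A p ` ideal_comp d W p"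
  proof
    fix x assume x: "x \<in> ideal_comp d W p"
    then have "x \<in> tensors d p"
      using ideal_comp_tensors[OF W(1)] by blast
    then have "x = thpow d A p (thpow d B p x)"
      by (simp add: thpow_inverse[OF AB])
    moreover have "thpow d B p x \<in> ideal_comp d W p"
      using thpow_ideal_comp_subset[OF W(3)] x by blast
    ultimately show "x \<in> thpow d A p ` ideal_comp d W p" by blast
  qed
qed

theorem corollary3p3:
  fixes d n :: nat and Rm :: "nat \<Rightarrow> nat \<Rightarrow> nat \<Rightarrow> nat \<Rightarrow> 'k::field" and q :: 'k
    and t :: "nat list \<Rightarrow> 'k" and Th :: "nat \<Rightarrow> nat \<Rightarrow> 'k"
  assumes hk: "hecke d Rm q"
    and n_pos: "n > 0"
    and dim1: "tdim (Upsilon d Rm q n) = 1"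
    and zero: "Upsilon d Rm q (Suc n) = {0}"
    and t_in: "t \<in> Upsilon d Rm q n" and t_nz: "t \<noteq> 0"
    and theta_def: "\<forall>v \<in> tensors d 1.
        Rchain d Rm n (tmul 1 v t) = tmul n t (thpow d Th 1 v)"
    and theta_GL: "bij_betw (thpow d Th 1) (tensors d 1) (tensors d 1)"
  shows "(\<forall>f \<in> tensors d 2. thpow d Th 2 (Rop d Rm 2 0 f) = Rop d Rm 2 0 (thpow d Th 2 f))
    \<and> (\<forall>p. bij_betw (thpow d Th p) (tensors d p) (tensors d p)
         \<and> thpow d Th p ` ideal_comp d (KerRq d Rm q) p = ideal_comp d (KerRq d Rm q) p
         \<and> thpow d Th p ` ideal_comp d (ImRq d Rm q) p = ideal_comp d (ImRq d Rm q) p)"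
proof -
  have t: "t \<in> tensors d n" using t_in by (simp add: Upsilon_def)
  have comm: "\<forall>f \<in> tensors d 2. thpow d Th 2 (Rop d Rm 2 0 f) = Rop d Rm 2 0 (thpow d Th 2 f)"
    using thpow_Rop_commute[OF hk t t_nz theta_def] by blast
  obtain S where TS: "identity_matrix d (mat_mult d Th S)" and ST: "identity_matrix d (mat_mult d S Th)"
    using bij_thpow_1_obtains_inverse_matrix[OF theta_GL] .
  have comm_S: "\<forall>f \<in> tensors d 2. thpow d S 2 (Rop d Rm 2 0 f) = Rop d Rm 2 0 (thpow d S 2 f)"
    using thpow_Rop_commute_inverse[OF TS ST comm] by blast
  have bij: "bij_betw (thpow d Th p) (tensors d p) (tensors d p)" for p
    using thpow_inverse[OF TS] thpow_inverse[OF ST] thpow_tensors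
    by (intro bij_betw_byWitness[where f'="thpow d S p"]) auto
  have "KerRq d Rm q \<subseteq> tensors d 2" "ImRq d Rm q \<subseteq> tensors d 2"
    by (auto simp: KerRq_def ImRq_def tensors_def Rop_def tscale_def)
  then have "thpow d Th p ` ideal_comp d (KerRq d Rm q) p = ideal_comp d (KerRq d Rm q) p"
    and "thpow d Th p ` ideal_comp d (ImRq d Rm q) p = ideal_comp d (ImRq d Rm q) p" for p
    using thpow_ideal_comp_eq[OF TS] thpow_KerRq_subset[OF comm] thpow_KerRq_subset[OF comm_S]
      thpow_ImRq_subset[OF comm] thpow_ImRq_subset[OF comm_S] by simp_all
  with comm bij show ?thesis by blast
qed

end
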